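(* An integral domain $D$ is a $\ast$-waf-SH domain if and only if $D$ is a $\ast$-SH domain whose $\ast$-class group $Cl_\ast(D)$ is a torsion group.
   Context: $\ast$ is a star operation on $D$ of finite character. A $\ast$-ideal is a nonzero fractional ideal $I$ with $I^\ast=I$; of finite type if $I=J^\ast$ for some nonzero finitely generated $J$. $I$ is $\ast$-invertible if $(II^{-1})^\ast=D$. $Cl_\ast(D)$ is the group of $\ast$-invertible fractional $\ast$-ideals under $(I,J)\mapsto (IJ)^\ast$ modulo the subgroup of nonzero principal fractional ideals. A $\ast$-homog ideal is a proper integral $\ast$-ideal $I$ of finite type such that $(A+B)^\ast\neq D$ for every pair $A,B$ of proper integral $\ast$-ideals of finite type containing $I$. $D$ is a $\ast$-SH domain if for every nonzero nonunit $x$, $xD$ is a $\ast$-product $(I_1\cdots I_n)^\ast$ of finitely many $\ast$-homog ideals. A $\ast$-waf-homog ideal is a $\ast$-homog ideal $I$ such that, if $I$ is $\ast$-invertible, then for every $\ast$-invertible $\ast$-ideal $J$ containing $I$ there is $j\ge1$ with $(J^j)^\ast$ principal. $D$ is a $\ast$-waf-SH domain if for every nonzero nonunit $x$, $xD$ is a $\ast$-product of finitely many $\ast$-waf-homog ideals. *)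

theory Defs
  imports Main
begin

text \<open>An integral domain D is modelled as a subring of a field 'k which is its
fraction field. Fractional ideals are D-submodules of 'k.\<close>

definition is_domain_with_frac_field :: "'k::field set \<Rightarrow> bool" where
  "is_domain_with_frac_field D \<longleftrightarrow>
     0 \<in> D \<and> 1 \<in> D \<and> (\<forall>x\<in>D. \<forall>y\<in>D. x + y \<in> D \<and> x * y \<in> D) \<and> (\<forall>x\<in>D. - x \<in> D) \<and>
     (\<forall>z. \<exists>a\<in>D. \<exists>b\<in>D. b \<noteq> 0 \<and> z = a / b)"

definition D_submod :: "'k::field set \<Rightarrow> 'k set \<Rightarrow> bool" where
  "D_submod D M \<longleftrightarrow> 0 \<in> M \<and> (\<forall>x\<in>M. \<forall>y\<in>M. x + y \<in> M) \<and> (\<forall>d\<in>D. \<forall>x\<in>M. d * x \<in> M)"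

definition gen :: "'k::field set \<Rightarrow> 'k set \<Rightarrow> 'k set" where
  "gen D S = \<Inter>{M. D_submod D M \<and> S \<subseteq> M}"

definition fin_gen :: "'k::field set \<Rightarrow> 'k set \<Rightarrow> bool" where
  "fin_gen D I \<longleftrightarrow> (\<exists>S. finite S \<and> I = gen D S)"

definition ideal_mult :: "'k::field set \<Rightarrow> 'k set \<Rightarrow> 'k set \<Rightarrow> 'k set" where
  "ideal_mult D I J = gen D {i * j | i j. i \<in> I \<and> j \<in> J}"

definition ideal_add :: "'k::field set \<Rightarrow> 'k set \<Rightarrow> 'k set \<Rightarrow> 'k set" where
  "ideal_add D I J = gen D (I \<union> J)"

fun ideal_pow :: "'k::field set \<Rightarrow> 'k set \<Rightarrow> nat \<Rightarrow> 'k set" where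
  "ideal_pow D I 0 = D"
| "ideal_pow D I (Suc n) = ideal_mult D (ideal_pow D I n) I"

definition ideal_prod :: "'k::field set \<Rightarrow> 'k set list \<Rightarrow> 'k set" where
  "ideal_prod D Is = foldr (ideal_mult D) Is D"

definition principal :: "'k::field set \<Rightarrow> 'k \<Rightarrow> 'k set" where
  "principal D x = (\<lambda>d. x * d) ` D"

definition scale :: "'k::field \<Rightarrow> 'k set \<Rightarrow> 'k set" where
  "scale x I = (\<lambda>y. x * y) ` I"

definition ideal_inv :: "'k::field set \<Rightarrow> 'k set \<Rightarrow> 'k set" where
  "ideal_inv D I = {x. \<forall>i\<in>I. x * i \<in> D}"

definition frac_ideal :: "'k::field set \<Rightarrow> 'k set \<Rightarrow> bool" where
  "frac_ideal D I \<longleftrightarrow> D_submod D I \<and> I \<noteq> {0} \<and> (\<exists>d\<in>D. d \<noteq> 0 \<and> (\<forall>x\<in>I. d * x \<in> D))"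

definition star_operation :: "'k::field set \<Rightarrow> ('k set \<Rightarrow> 'k set) \<Rightarrow> bool" where
  "star_operation D st \<longleftrightarrow>
     (\<forall>I. frac_ideal D I \<longrightarrow> frac_ideal D (st I)) \<and>
     (\<forall>x. x \<noteq> 0 \<longrightarrow> st (principal D x) = principal D x) \<and>
     (\<forall>x I. x \<noteq> 0 \<and> frac_ideal D I \<longrightarrow> st (scale x I) = scale x (st I)) \<and>
     (\<forall>I. frac_ideal D I \<longrightarrow> I \<subseteq> st I) \<and>
     (\<forall>I J. frac_ideal D I \<and> frac_ideal D J \<and> I \<subseteq> J \<longrightarrow> st I \<subseteq> st J) \<and>
     (\<forall>I. frac_ideal D I \<longrightarrow> st (st I) = st I)"

definition finite_character :: "'k::field set \<Rightarrow> ('k set \<Rightarrow> 'k set) \<Rightarrow> bool" where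
  "finite_character D st \<longleftrightarrow>
     (\<forall>I. frac_ideal D I \<longrightarrow>
        st I = \<Union>{st J | J. frac_ideal D J \<and> fin_gen D J \<and> J \<subseteq> I})"

definition star_ideal :: "'k::field set \<Rightarrow> ('k set \<Rightarrow> 'k set) \<Rightarrow> 'k set \<Rightarrow> bool" where
  "star_ideal D st I \<longleftrightarrow> frac_ideal D I \<and> st I = I"

definition finite_type :: "'k::field set \<Rightarrow> ('k set \<Rightarrow> 'k set) \<Rightarrow> 'k set \<Rightarrow> bool" where
  "finite_type D st I \<longleftrightarrow> (\<exists>J. frac_ideal D J \<and> fin_gen D J \<and> I = st J)"

definition star_invertible :: "'k::field set \<Rightarrow> ('k set \<Rightarrow> 'k set) \<Rightarrow> 'k set \<Rightarrow> bool" where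
  "star_invertible D st I \<longleftrightarrow> frac_ideal D I \<and> st (ideal_mult D I (ideal_inv D I)) = D"

definition is_principal :: "'k::field set \<Rightarrow> 'k set \<Rightarrow> bool" where
  "is_principal D I \<longleftrightarrow> (\<exists>x. x \<noteq> 0 \<and> I = principal D x)"

definition proper_integral_star_ideal :: "'k::field set \<Rightarrow> ('k set \<Rightarrow> 'k set) \<Rightarrow> 'k set \<Rightarrow> bool" where
  "proper_integral_star_ideal D st I \<longleftrightarrow> star_ideal D st I \<and> I \<subseteq> D \<and> I \<noteq> D"

definition star_homog :: "'k::field set \<Rightarrow> ('k set \<Rightarrow> 'k set) \<Rightarrow> 'k set \<Rightarrow> bool" where
  "star_homog D st I \<longleftrightarrow>
     proper_integral_star_ideal D st I \<and> finite_type D st I \<and>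
     (\<forall>A B. proper_integral_star_ideal D st A \<and> finite_type D st A \<and>
            proper_integral_star_ideal D st B \<and> finite_type D st B \<and>
            I \<subseteq> A \<and> I \<subseteq> B \<longrightarrow> st (ideal_add D A B) \<noteq> D)"

definition star_waf_homog :: "'k::field set \<Rightarrow> ('k set \<Rightarrow> 'k set) \<Rightarrow> 'k set \<Rightarrow> bool" where
  "star_waf_homog D st I \<longleftrightarrow>
     star_homog D st I \<and>
     (star_invertible D st I \<longrightarrow>
        (\<forall>J. star_invertible D st J \<and> star_ideal D st J \<and> I \<subseteq> J \<longrightarrow>
             (\<exists>j\<ge>1. is_principal D (st (ideal_pow D J j)))))"

definition nonzero_nonunit :: "'k::field set \<Rightarrow> 'k \<Rightarrow> bool" where
  "nonzero_nonunit D x \<longleftrightarrow> x \<in> D \<and> x \<noteq> 0 \<and> inverse x \<notin> D"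

definition star_SH :: "'k::field set \<Rightarrow> ('k set \<Rightarrow> 'k set) \<Rightarrow> bool" where
  "star_SH D st \<longleftrightarrow>
     (\<forall>x. nonzero_nonunit D x \<longrightarrow>
        (\<exists>Is. (\<forall>I\<in>set Is. star_homog D st I) \<and> principal D x = st (ideal_prod D Is)))"

definition star_waf_SH :: "'k::field set \<Rightarrow> ('k set \<Rightarrow> 'k set) \<Rightarrow> bool" where
  "star_waf_SH D st \<longleftrightarrow>
     (\<forall>x. nonzero_nonunit D x \<longrightarrow>
        (\<exists>Is. (\<forall>I\<in>set Is. star_waf_homog D st I) \<and> principal D x = st (ideal_prod D Is)))"

fun star_pow :: "'k::field set \<Rightarrow> ('k set \<Rightarrow> 'k set) \<Rightarrow> 'k set \<Rightarrow> nat \<Rightarrow> 'k set" where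
  "star_pow D st I 0 = D"
| "star_pow D st I (Suc n) = st (ideal_mult D (star_pow D st I n) I)"

text \<open>Cl_*(D) is torsion: every class [I] of a *-invertible *-ideal has finite order,
i.e. some positive group power of I lies in the subgroup of principal ideals.\<close>
definition star_class_group_torsion :: "'k::field set \<Rightarrow> ('k set \<Rightarrow> 'k set) \<Rightarrow> bool" where
  "star_class_group_torsion D st \<longleftrightarrow>
     (\<forall>I. star_invertible D st I \<and> star_ideal D st I \<longrightarrow>
        (\<exists>n\<ge>1. is_principal D (star_pow D st I n)))"

end

theory Submission
  imports Defs
begin

text \<open>The implication from \<open>\<ast>\<close>-waf-SH to \<open>\<ast>\<close>-SH is immediate, and so is the converse
given torsion, since the waf condition then holds for every \<open>\<ast>\<close>-invertible \<open>\<ast>\<close>-ideal.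
For torsion, let \<open>J\<close> be \<open>\<ast>\<close>-invertible and pick a nonzero nonunit \<open>x \<in> J\<close>. A \<open>\<ast>\<close>-waf-homog
factor \<open>I\<close> of \<open>xD\<close> is \<open>\<ast>\<close>-invertible, so \<open>I\<^sup>m\<close> is principal for some \<open>m\<close>; and
\<open>I \<subseteq> (x\<^sup>-\<^sup>1 J I)\<^sup>\<ast>\<close>, a \<open>\<ast>\<close>-invertible \<open>\<ast>\<close>-ideal, so some power \<open>(x\<^sup>-\<^sup>1 J I)\<^sup>j\<close> is principal too.
Since \<open>((x\<^sup>-\<^sup>1 J I)\<^sup>j\<^sup>m)\<^sup>\<ast> = x\<^sup>-\<^sup>j\<^sup>m (J\<^sup>j\<^sup>m)\<^sup>\<ast> (I\<^sup>j\<^sup>m)\<^sup>\<ast>\<close>, the \<open>\<ast>\<close>-power \<open>(J\<^sup>j\<^sup>m)\<^sup>\<ast>\<close> is principal.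
If \<open>D\<close> has no nonzero nonunit, it is a field and there is nothing to prove.\<close>

lemma D_submod_gen: "D_submod D (gen D S)"
  unfolding gen_def D_submod_def Inter_iff by blast

lemma gen_superset: "S \<subseteq> gen D S"
  unfolding gen_def by blast

lemma gen_least: "D_submod D M \<Longrightarrow> S \<subseteq> M \<Longrightarrow> gen D S \<subseteq> M"
  unfolding gen_def by blast

lemma D_submod_ideal_mult: "D_submod D (ideal_mult D A B)"
  unfolding ideal_mult_def by (rule D_submod_gen)

lemma ideal_mult_memI: "a \<in> A \<Longrightarrow> b \<in> B \<Longrightarrow> a * b \<in> ideal_mult D A B"
  unfolding ideal_mult_def by (rule subsetD[OF gen_superset]) blast

lemma ideal_mult_least:
  "D_submod D M \<Longrightarrow> (\<And>a b. a \<in> A \<Longrightarrow> b \<in> B \<Longrightarrow> a * b \<in> M) \<Longrightarrow> ideal_mult D A B \<subseteq> M"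
  unfolding ideal_mult_def by (rule gen_least) blast+

lemma ideal_mult_commute: "ideal_mult D A B = ideal_mult D B A"
proof -
  have "{i * j | i j. i \<in> A \<and> j \<in> B} = {i * j | i j. i \<in> B \<and> j \<in> A}"
    by (auto; metis mult.commute)
  then show ?thesis
    unfolding ideal_mult_def by (rule arg_cong)
qed

lemma ideal_mult_mono: "A \<subseteq> A' \<Longrightarrow> B \<subseteq> B' \<Longrightarrow> ideal_mult D A B \<subseteq> ideal_mult D A' B'"
  by (rule ideal_mult_least[OF D_submod_ideal_mult]) (auto intro: ideal_mult_memI)

lemma D_submod_preimage_mult: "D_submod D M \<Longrightarrow> D_submod D {u. c * u \<in> M}"
  unfolding D_submod_def by (simp add: distrib_left mult.left_commute)

lemma ideal_mult_assoc_subset: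
  "ideal_mult D (ideal_mult D A B) C \<subseteq> ideal_mult D A (ideal_mult D B C)"
proof (rule ideal_mult_least[OF D_submod_ideal_mult])
  fix u c assume u: "u \<in> ideal_mult D A B" and c: "c \<in> C"
  have "ideal_mult D A B \<subseteq> {u. c * u \<in> ideal_mult D A (ideal_mult D B C)}"
  proof (rule ideal_mult_least[OF D_submod_preimage_mult[OF D_submod_ideal_mult]])
    fix a b assume "a \<in> A" "b \<in> B"
    then have "a * (b * c) \<in> ideal_mult D A (ideal_mult D B C)"
      using c by (intro ideal_mult_memI)
    then show "a * b \<in> {u. c * u \<in> ideal_mult D A (ideal_mult D B C)}"
      by (simp add: ac_simps)
  qed
  with u show "u * c \<in> ideal_mult D A (ideal_mult D B C)"
    by (auto simp: mult.commute)
qed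

lemma ideal_mult_assoc:
  "ideal_mult D (ideal_mult D A B) C = ideal_mult D A (ideal_mult D B C)"
proof
  show "ideal_mult D (ideal_mult D A B) C \<subseteq> ideal_mult D A (ideal_mult D B C)"
    by (rule ideal_mult_assoc_subset)
  have "ideal_mult D A (ideal_mult D B C) = ideal_mult D (ideal_mult D B C) A"
    by (rule ideal_mult_commute)
  also have "\<dots> \<subseteq> ideal_mult D B (ideal_mult D C A)"
    by (rule ideal_mult_assoc_subset)
  also have "\<dots> = ideal_mult D (ideal_mult D C A) B"
    by (rule ideal_mult_commute)
  also have "\<dots> \<subseteq> ideal_mult D C (ideal_mult D A B)"
    by (rule ideal_mult_assoc_subset)
  also have "\<dots> = ideal_mult D (ideal_mult D A B) C"
    by (rule ideal_mult_commute)
  finally show "ideal_mult D A (ideal_mult D B C) \<subseteq> ideal_mult D (ideal_mult D A B) C" .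
qed

lemma ideal_mult_left_commute:
  "ideal_mult D A (ideal_mult D B C) = ideal_mult D B (ideal_mult D A C)"
  by (metis ideal_mult_assoc ideal_mult_commute)

lemma D_submod_scale: "D_submod D X \<Longrightarrow> D_submod D (scale c X)"
  unfolding D_submod_def scale_def
  by (auto simp: distrib_left[symmetric] mult.left_commute[of _ c] intro!: image_eqI[of 0 _ 0])

lemma ideal_mult_principal:
  assumes X: "D_submod D X" and one: "1 \<in> D"
  shows "ideal_mult D (principal D c) X = scale c X"
proof
  show "ideal_mult D (principal D c) X \<subseteq> scale c X"
  proof (rule ideal_mult_least[OF D_submod_scale[OF X]])
    fix a b assume "a \<in> principal D c" "b \<in> X"
    then obtain d where "d \<in> D" "a = c * d" "d * b \<in> X"
      using X unfolding principal_def D_submod_def by auto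
    then show "a * b \<in> scale c X"
      unfolding scale_def by (auto simp: ac_simps)
  qed
  show "scale c X \<subseteq> ideal_mult D (principal D c) X"
  proof
    fix y assume "y \<in> scale c X"
    then obtain x where x: "x \<in> X" "y = c * x"
      unfolding scale_def by auto
    have "c * 1 \<in> principal D c"
      using one unfolding principal_def by blast
    from ideal_mult_memI[OF this x(1)] x(2) show "y \<in> ideal_mult D (principal D c) X"
      by simp
  qed
qed

lemma principal_one: "principal D 1 = D"
  unfolding principal_def by simp

lemma scale_scale: "scale a (scale b X) = scale (a * b) X"
  unfolding scale_def by (simp add: image_image mult.assoc)

lemma scale_one: "scale 1 X = X"
  unfolding scale_def by simp

lemma scale_principal: "scale a (principal D b) = principal D (a * b)"
  unfolding scale_def principal_def by (simp add: image_image mult.assoc)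

locale star_domain =
  fixes D :: "'k::field set" and st :: "'k set \<Rightarrow> 'k set"
  assumes domain: "is_domain_with_frac_field D" and star: "star_operation D st"
begin

lemma zero_mem: "0 \<in> D"
  and one_mem: "1 \<in> D"
  and add_mem: "x \<in> D \<Longrightarrow> y \<in> D \<Longrightarrow> x + y \<in> D"
  and mult_mem: "x \<in> D \<Longrightarrow> y \<in> D \<Longrightarrow> x * y \<in> D"
  and quotient_repr: "\<exists>a\<in>D. \<exists>b\<in>D. b \<noteq> 0 \<and> z = a / b"
  using domain unfolding is_domain_with_frac_field_def by simp_all

lemma star_frac_ideal: "frac_ideal D I \<Longrightarrow> frac_ideal D (st I)"
  and star_principal: "x \<noteq> 0 \<Longrightarrow> st (principal D x) = principal D x"
  and star_scale: "x \<noteq> 0 \<Longrightarrow> frac_ideal D I \<Longrightarrow> st (scale x I) = scale x (st I)"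
  and star_extensive: "frac_ideal D I \<Longrightarrow> I \<subseteq> st I"
  and star_mono: "frac_ideal D I \<Longrightarrow> frac_ideal D J \<Longrightarrow> I \<subseteq> J \<Longrightarrow> st I \<subseteq> st J"
  and star_idem: "frac_ideal D I \<Longrightarrow> st (st I) = st I"
  using star unfolding star_operation_def by simp_all

lemma D_submod_self: "D_submod D D"
  unfolding D_submod_def using zero_mem add_mem mult_mem by blast

lemma frac_ideal_D_submod: "frac_ideal D I \<Longrightarrow> D_submod D I"
  unfolding frac_ideal_def by blast

lemma frac_ideal_nonzero_mem:
  assumes "frac_ideal D I"
  obtains a where "a \<in> I" "a \<noteq> 0"
  using assms unfolding frac_ideal_def D_submod_def by auto

lemma frac_ideal_denominator:
  assumes "frac_ideal D I"
  obtains d where "d \<in> D" "d \<noteq> 0" "\<And>x. x \<in> I \<Longrightarrow> d * x \<in> D"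
proof -
  from assms obtain d where "d \<in> D" "d \<noteq> 0" "\<forall>x\<in>I. d * x \<in> D"
    unfolding frac_ideal_def by blast
  then show thesis
    using that by blast
qed

lemma star_D: "st D = D"
  using star_principal[of 1] by (simp add: principal_one)

lemma frac_ideal_D: "frac_ideal D D"
  unfolding frac_ideal_def using D_submod_self one_mem mult_mem by (auto intro!: bexI[of _ 1])

lemma D_submod_principal: "D_submod D (principal D x)"
proof -
  have "principal D x = scale x D"
    unfolding principal_def scale_def by simp
  then show ?thesis
    using D_submod_scale[OF D_submod_self] by simp
qed

lemma frac_ideal_principal:
  assumes x: "x \<noteq> 0"
  shows "frac_ideal D (principal D x)"
  unfolding frac_ideal_def
proof (intro conjI)
  show "D_submod D (principal D x)"
    by (rule D_submod_principal)
  have "x * 1 \<in> principal D x"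
    using one_mem unfolding principal_def by blast
  then show "principal D x \<noteq> {0}"
    using x by auto
  obtain p q where pq: "p \<in> D" "q \<in> D" "q \<noteq> 0" "x = p / q"
    using quotient_repr by blast
  have "q * (x * d) = p * d" for d
    using pq by (simp add: field_simps)
  then have "\<forall>y\<in>principal D x. q * y \<in> D"
    unfolding principal_def using pq mult_mem by auto
  then show "\<exists>d\<in>D. d \<noteq> 0 \<and> (\<forall>y\<in>principal D x. d * y \<in> D)"
    using pq by blast
qed

lemma frac_ideal_mult:
  assumes A: "frac_ideal D A" and B: "frac_ideal D B"
  shows "frac_ideal D (ideal_mult D A B)"
  unfolding frac_ideal_def
proof (intro conjI)
  show "D_submod D (ideal_mult D A B)"
    by (rule D_submod_ideal_mult)
  obtain a b where "a \<in> A" "a \<noteq> 0" "b \<in> B" "b \<noteq> 0"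
    using A B by (meson frac_ideal_nonzero_mem)
  then have "a * b \<in> ideal_mult D A B" "a * b \<noteq> 0"
    by (auto intro: ideal_mult_memI)
  then show "ideal_mult D A B \<noteq> {0}"
    by blast
  obtain d where d: "d \<in> D" "d \<noteq> 0" "\<And>x. x \<in> A \<Longrightarrow> d * x \<in> D"
    using frac_ideal_denominator[OF A] by blast
  obtain e where e: "e \<in> D" "e \<noteq> 0" "\<And>x. x \<in> B \<Longrightarrow> e * x \<in> D"
    using frac_ideal_denominator[OF B] by blast
  have "ideal_mult D A B \<subseteq> {u. (d * e) * u \<in> D}"
  proof (rule ideal_mult_least[OF D_submod_preimage_mult[OF D_submod_self]])
    fix x y assume "x \<in> A" "y \<in> B"
    then have "(d * x) * (e * y) \<in> D"
      using d e mult_mem by blast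
    then show "x * y \<in> {u. (d * e) * u \<in> D}"
      by (simp add: ac_simps)
  qed
  then show "\<exists>c\<in>D. c \<noteq> 0 \<and> (\<forall>x\<in>ideal_mult D A B. c * x \<in> D)"
    using d e mult_mem by (intro bexI[of _ "d * e"]) auto
qed

lemma scale_eq_ideal_mult: "D_submod D A \<Longrightarrow> scale c A = ideal_mult D (principal D c) A"
  using ideal_mult_principal[OF _ one_mem] by simp

lemma frac_ideal_scale: "c \<noteq> 0 \<Longrightarrow> frac_ideal D A \<Longrightarrow> frac_ideal D (scale c A)"
  by (metis scale_eq_ideal_mult frac_ideal_D_submod frac_ideal_mult frac_ideal_principal)

lemma ideal_mult_D_left: "D_submod D A \<Longrightarrow> ideal_mult D D A = A"
  by (metis ideal_mult_principal[OF _ one_mem] principal_one scale_one)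

lemma D_submod_ideal_inv: "D_submod D (ideal_inv D A)"
  unfolding D_submod_def ideal_inv_def
  using zero_mem add_mem mult_mem by (simp add: distrib_right mult.assoc)

lemma frac_ideal_inv:
  assumes A: "frac_ideal D A"
  shows "frac_ideal D (ideal_inv D A)"
  unfolding frac_ideal_def
proof (intro conjI)
  show "D_submod D (ideal_inv D A)"
    by (rule D_submod_ideal_inv)
  obtain d where "d \<in> D" "d \<noteq> 0" "\<And>x. x \<in> A \<Longrightarrow> d * x \<in> D"
    using frac_ideal_denominator[OF A] by blast
  then show "ideal_inv D A \<noteq> {0}"
    unfolding ideal_inv_def by (auto simp: mult.commute)
  obtain a where a: "a \<in> A" "a \<noteq> 0"
    using A by (rule frac_ideal_nonzero_mem)
  obtain p q where pq: "p \<in> D" "q \<in> D" "q \<noteq> 0" "a = p / q"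
    using quotient_repr by blast
  have "p * u \<in> D" if "u \<in> ideal_inv D A" for u
  proof -
    have "u * a \<in> D"
      using that a unfolding ideal_inv_def by blast
    moreover have "p * u = (u * a) * q"
      using pq by (simp add: field_simps)
    ultimately show ?thesis
      using pq(2) mult_mem by metis
  qed
  then show "\<exists>c\<in>D. c \<noteq> 0 \<and> (\<forall>x\<in>ideal_inv D A. c * x \<in> D)"
    using pq a by auto
qed

lemma frac_ideal_prod: "(\<And>I. I \<in> set Is \<Longrightarrow> frac_ideal D I) \<Longrightarrow> frac_ideal D (ideal_prod D Is)"
  by (induction Is) (auto simp: ideal_prod_def frac_ideal_D frac_ideal_mult)

lemma star_subset_D: "frac_ideal D A \<Longrightarrow> A \<subseteq> D \<Longrightarrow> st A \<subseteq> D"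
  using star_mono[OF _ frac_ideal_D] star_D by blast

lemma star_ideal_mult_star_left:
  assumes A: "frac_ideal D A" and B: "frac_ideal D B"
  shows "st (ideal_mult D (st A) B) = st (ideal_mult D A B)"
proof
  have AB: "frac_ideal D (ideal_mult D A B)"
    using A B by (rule frac_ideal_mult)
  have sAB: "frac_ideal D (ideal_mult D (st A) B)"
    using star_frac_ideal[OF A] B by (rule frac_ideal_mult)
  show "st (ideal_mult D A B) \<subseteq> st (ideal_mult D (st A) B)"
    using star_mono[OF AB sAB] ideal_mult_mono[OF star_extensive[OF A] order_refl] by blast
  have "ideal_mult D (st A) B \<subseteq> st (ideal_mult D A B)"
  proof (rule ideal_mult_least[OF frac_ideal_D_submod[OF star_frac_ideal[OF AB]]])
    fix a b assume a: "a \<in> st A" and b: "b \<in> B"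
    show "a * b \<in> st (ideal_mult D A B)"
    proof (cases "b = 0")
      case True
      then show ?thesis
        using frac_ideal_D_submod[OF star_frac_ideal[OF AB]] unfolding D_submod_def by simp
    next
      case False
      have "scale b A \<subseteq> ideal_mult D A B"
        unfolding scale_def using b by (auto simp: mult.commute intro: ideal_mult_memI)
      then have "scale b (st A) \<subseteq> st (ideal_mult D A B)"
        using star_mono[OF frac_ideal_scale[OF False A] AB] star_scale[OF False A] by simp
      moreover have "a * b \<in> scale b (st A)"
        using a unfolding scale_def by (metis image_eqI mult.commute)
      ultimately show ?thesis
        by blast
    qed
  qed
  then show "st (ideal_mult D (st A) B) \<subseteq> st (ideal_mult D A B)"
    using star_mono[OF sAB star_frac_ideal[OF AB]] star_idem[OF AB] by simp
qed

definition star_mult :: "'k set \<Rightarrow> 'k set \<Rightarrow> 'k set" where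
  "star_mult A B = st (ideal_mult D A B)"

abbreviation is_star_ideal :: "'k set \<Rightarrow> bool" where
  "is_star_ideal A \<equiv> star_ideal D st A"

lemma star_idealD: "is_star_ideal A \<Longrightarrow> frac_ideal D A" "is_star_ideal A \<Longrightarrow> st A = A"
  unfolding star_ideal_def by auto

lemma star_ideal_star_mult: "frac_ideal D A \<Longrightarrow> frac_ideal D B \<Longrightarrow> is_star_ideal (star_mult A B)"
  unfolding star_mult_def star_ideal_def using star_frac_ideal star_idem frac_ideal_mult by blast

lemma star_mult_closed: "is_star_ideal A \<Longrightarrow> is_star_ideal B \<Longrightarrow> is_star_ideal (star_mult A B)"
  using star_ideal_star_mult star_idealD by blast

lemma star_mult_commute: "star_mult A B = star_mult B A"
  unfolding star_mult_def by (metis ideal_mult_commute)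

lemma star_mult_assoc:
  assumes A: "frac_ideal D A" and B: "frac_ideal D B" and C: "frac_ideal D C"
  shows "star_mult (star_mult A B) C = star_mult A (star_mult B C)"
proof -
  have "star_mult (star_mult A B) C = st (ideal_mult D (ideal_mult D A B) C)"
    unfolding star_mult_def by (rule star_ideal_mult_star_left[OF frac_ideal_mult[OF A B] C])
  also have "\<dots> = st (ideal_mult D (ideal_mult D B C) A)"
    by (metis ideal_mult_assoc ideal_mult_commute)
  also have "\<dots> = st (ideal_mult D (st (ideal_mult D B C)) A)"
    by (rule star_ideal_mult_star_left[OF frac_ideal_mult[OF B C] A, symmetric])
  also have "\<dots> = star_mult A (star_mult B C)"
    unfolding star_mult_def by (metis ideal_mult_commute)
  finally show ?thesis .
qed

lemma star_mult_left_commute: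
  assumes "is_star_ideal A" "is_star_ideal B" "is_star_ideal C"
  shows "star_mult A (star_mult B C) = star_mult B (star_mult A C)"
  using assms star_mult_assoc star_mult_commute star_idealD by metis

lemma star_ideal_D: "is_star_ideal D"
  unfolding star_ideal_def using frac_ideal_D star_D by blast

lemma star_mult_D_left: "is_star_ideal A \<Longrightarrow> star_mult D A = A"
  unfolding star_mult_def by (metis ideal_mult_D_left frac_ideal_D_submod star_idealD)

lemma star_mult_D_right: "is_star_ideal A \<Longrightarrow> star_mult A D = A"
  using star_mult_D_left star_mult_commute by metis

lemma star_ideal_principal: "x \<noteq> 0 \<Longrightarrow> is_star_ideal (principal D x)"
  unfolding star_ideal_def using frac_ideal_principal star_principal by blast

lemma star_mult_principal_left:
  assumes A: "frac_ideal D A" and x: "x \<noteq> 0"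
  shows "star_mult (principal D x) A = scale x (st A)"
  unfolding star_mult_def
  using scale_eq_ideal_mult[OF frac_ideal_D_submod[OF A]] star_scale[OF x A] by simp

lemma star_mult_principal_principal:
  "x \<noteq> 0 \<Longrightarrow> y \<noteq> 0 \<Longrightarrow> star_mult (principal D x) (principal D y) = principal D (x * y)"
  using star_mult_principal_left[OF frac_ideal_principal] star_principal scale_principal by simp

lemma is_principal_cancel_principal:
  assumes A: "is_star_ideal A" and w: "w \<noteq> 0"
    and P: "is_principal D (star_mult (principal D w) A)"
  shows "is_principal D A"
proof -
  obtain z where z: "z \<noteq> 0" "scale w A = principal D z"
    using P star_mult_principal_left[OF star_idealD(1)[OF A] w] star_idealD(2)[OF A]
    unfolding is_principal_def by auto
  have "A = scale (inverse w) (scale w A)"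
    using w by (simp add: scale_scale scale_one)
  also have "\<dots> = principal D (inverse w * z)"
    using z(2) by (simp add: scale_principal)
  finally show ?thesis
    unfolding is_principal_def using z w by (intro exI[of _ "inverse w * z"]) simp
qed

subsection \<open>Powers in the \<open>\<ast>\<close>-class group\<close>

declare star_pow.simps(2)[simp del]

lemma star_pow_Suc: "star_pow D st A (Suc n) = star_mult (star_pow D st A n) A"
  unfolding star_mult_def by (rule star_pow.simps(2))

lemma star_ideal_star_pow: "is_star_ideal A \<Longrightarrow> is_star_ideal (star_pow D st A n)"
  by (induction n) (auto simp: star_pow_Suc star_ideal_D star_mult_closed)

lemma star_pow_add:
  assumes A: "is_star_ideal A"
  shows "star_pow D st A (m + n) = star_mult (star_pow D st A m) (star_pow D st A n)"
proof (induction n)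
  case 0
  then show ?case
    using star_mult_D_right[OF star_ideal_star_pow[OF A]] by simp
next
  case (Suc n)
  then show ?case
    using star_mult_assoc star_ideal_star_pow[OF A] A star_idealD(1)
    by (simp add: star_pow_Suc)
qed

lemma star_pow_mult:
  assumes A: "is_star_ideal A"
  shows "star_pow D st A (m * n) = star_pow D st (star_pow D st A m) n"
proof (induction n)
  case 0
  then show ?case
    by simp
next
  case (Suc n)
  have "star_pow D st A (m * Suc n) = star_pow D st A (m * n + m)"
    by (simp add: add.commute)
  also have "\<dots> = star_mult (star_pow D st A (m * n)) (star_pow D st A m)"
    by (rule star_pow_add[OF A])
  finally show ?case
    using Suc by (simp add: star_pow_Suc)
qed

lemma star_pow_star_mult:
  assumes A: "is_star_ideal A" and B: "is_star_ideal B"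
  shows "star_pow D st (star_mult A B) n = star_mult (star_pow D st A n) (star_pow D st B n)"
proof (induction n)
  case 0
  then show ?case
    using star_mult_D_left[OF star_ideal_D] by simp
next
  case (Suc n)
  have "star_pow D st (star_mult A B) (Suc n)
      = star_mult (star_mult (star_pow D st A n) (star_pow D st B n)) (star_mult A B)"
    using Suc by (simp add: star_pow_Suc)
  also have "\<dots> = star_mult (star_mult (star_pow D st A n) A) (star_mult (star_pow D st B n) B)"
    using A B star_ideal_star_pow star_mult_closed star_mult_assoc star_mult_left_commute star_idealD(1)
    by metis
  finally show ?case
    by (simp add: star_pow_Suc)
qed

lemma star_pow_principal:
  assumes x: "x \<noteq> 0"
  shows "star_pow D st (principal D x) n = principal D (x ^ n)"
proof (induction n)
  case 0
  then show ?case
    by (simp add: principal_one)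
next
  case (Suc n)
  then show ?case
    using star_mult_principal_principal[of "x ^ n" x] x by (simp add: star_pow_Suc mult.commute)
qed

lemma is_principal_star_pow: "is_principal D P \<Longrightarrow> is_principal D (star_pow D st P n)"
  unfolding is_principal_def using star_pow_principal by (metis power_not_zero)

lemma star_ideal_pow:
  assumes A: "frac_ideal D A"
  shows "st (ideal_pow D A n) = star_pow D st A n"
proof -
  have "frac_ideal D (ideal_pow D A n) \<and> st (ideal_pow D A n) = star_pow D st A n"
  proof (induction n)
    case 0
    then show ?case
      using frac_ideal_D star_D by simp
  next
    case (Suc n)
    then show ?case
      using star_ideal_mult_star_left[OF _ A, of "ideal_pow D A n"] frac_ideal_mult[OF _ A]
      by (simp add: star_pow_Suc star_mult_def)
  qed
  then show ?thesis ..
qed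

subsection \<open>\<open>\<ast>\<close>-invertibility\<close>

lemma ideal_mult_inv_subset_D: "ideal_mult D A (ideal_inv D A) \<subseteq> D"
  by (rule ideal_mult_least[OF D_submod_self]) (simp add: ideal_inv_def, metis mult.commute)

lemma frac_ideal_mult_inv: "frac_ideal D A \<Longrightarrow> frac_ideal D (ideal_mult D A (ideal_inv D A))"
  using frac_ideal_mult frac_ideal_inv by blast

lemma star_mult_inv_subset_D: "frac_ideal D A \<Longrightarrow> st (ideal_mult D A (ideal_inv D A)) \<subseteq> D"
  using star_subset_D[OF frac_ideal_mult_inv ideal_mult_inv_subset_D] by blast

lemma star_invertibleI:
  assumes A: "frac_ideal D A" and "D \<subseteq> st (ideal_mult D A B)" and "B \<subseteq> ideal_inv D A"
    and B: "frac_ideal D B"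
  shows "star_invertible D st A"
proof -
  have "st (ideal_mult D A B) \<subseteq> st (ideal_mult D A (ideal_inv D A))"
    using star_mono[OF frac_ideal_mult[OF A B] frac_ideal_mult_inv[OF A]]
      ideal_mult_mono[OF order_refl \<open>B \<subseteq> ideal_inv D A\<close>] by blast
  then show ?thesis
    unfolding star_invertible_def using A assms(2) star_mult_inv_subset_D[OF A] by blast
qed

lemma ideal_inv_star:
  assumes A: "frac_ideal D A"
  shows "ideal_inv D (st A) = ideal_inv D A"
proof
  show "ideal_inv D (st A) \<subseteq> ideal_inv D A"
    unfolding ideal_inv_def using star_extensive[OF A] by blast
  show "ideal_inv D A \<subseteq> ideal_inv D (st A)"
  proof
    fix u assume u: "u \<in> ideal_inv D A"
    show "u \<in> ideal_inv D (st A)"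
    proof (cases "u = 0")
      case True
      then show ?thesis
        unfolding ideal_inv_def using zero_mem by simp
    next
      case False
      have "scale u A \<subseteq> D"
        using u unfolding ideal_inv_def scale_def by blast
      then have "scale u (st A) \<subseteq> D"
        using star_subset_D[OF frac_ideal_scale[OF False A]] star_scale[OF False A] by simp
      then show ?thesis
        unfolding ideal_inv_def scale_def by blast
    qed
  qed
qed

lemma ideal_mult_inv_subset_inv_mult:
  "ideal_mult D (ideal_inv D A) (ideal_inv D B) \<subseteq> ideal_inv D (ideal_mult D A B)"
proof (rule ideal_mult_least[OF D_submod_ideal_inv])
  fix a' b' assume a': "a' \<in> ideal_inv D A" and b': "b' \<in> ideal_inv D B"
  have "ideal_mult D A B \<subseteq> {u. (a' * b') * u \<in> D}"
  proof (rule ideal_mult_least[OF D_submod_preimage_mult[OF D_submod_self]])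
    fix a b assume "a \<in> A" "b \<in> B"
    then have "(a' * a) * (b' * b) \<in> D"
      using a' b' mult_mem unfolding ideal_inv_def by blast
    then show "a * b \<in> {u. (a' * b') * u \<in> D}"
      by (simp add: ac_simps)
  qed
  then show "a' * b' \<in> ideal_inv D (ideal_mult D A B)"
    unfolding ideal_inv_def by blast
qed

lemma star_invertible_star_mult:
  assumes A: "star_invertible D st A" and B: "star_invertible D st B"
  shows "star_invertible D st (star_mult A B)"
proof -
  have fA: "frac_ideal D A" and fB: "frac_ideal D B"
    using A B unfolding star_invertible_def by auto
  define C where "C = ideal_mult D A B"
  define A' where "A' = ideal_inv D A"
  define B' where "B' = ideal_inv D B"
  have fC: "frac_ideal D C"
    unfolding C_def using fA fB by (rule frac_ideal_mult)
  have fA': "frac_ideal D A'" and fB': "frac_ideal D B'"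
    unfolding A'_def B'_def using frac_ideal_inv fA fB by auto
  have "ideal_mult D C (ideal_mult D A' B')
      = ideal_mult D (ideal_mult D A A') (ideal_mult D B B')"
    unfolding C_def by (metis ideal_mult_assoc ideal_mult_left_commute)
  then have "st (ideal_mult D C (ideal_mult D A' B'))
      = st (ideal_mult D (st (ideal_mult D A A')) (ideal_mult D B B'))"
    using star_ideal_mult_star_left[OF frac_ideal_mult[OF fA fA'] frac_ideal_mult[OF fB fB']] by simp
  also have "\<dots> = D"
    using A B ideal_mult_D_left[OF D_submod_ideal_mult]
    unfolding star_invertible_def A'_def B'_def by simp
  finally have "star_invertible D st C"
    using star_invertibleI[OF fC _ _ frac_ideal_mult[OF fA' fB']]
      ideal_mult_inv_subset_inv_mult[of A B]
    unfolding C_def A'_def B'_def by simp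
  then show ?thesis
    using ideal_inv_star[OF fC] star_ideal_mult_star_left[OF fC frac_ideal_inv[OF fC]] star_frac_ideal[OF fC]
    unfolding star_invertible_def star_mult_def C_def by simp
qed

text \<open>The inverse of \<open>I\<close> is witnessed by \<open>x\<^sup>-\<^sup>1 R\<close>.\<close>

lemma star_invertible_factor:
  assumes I: "frac_ideal D I" and R: "frac_ideal D R" and x: "x \<noteq> 0"
    and IR_eq: "st (ideal_mult D I R) = principal D x"
  shows "star_invertible D st I"
proof -
  define S where "S = scale (inverse x) R"
  have fS: "frac_ideal D S"
    unfolding S_def using frac_ideal_scale[OF _ R] x by simp
  have IR: "frac_ideal D (ideal_mult D I R)"
    using I R by (rule frac_ideal_mult)
  have "S \<subseteq> ideal_inv D I"
  proof
    fix s assume "s \<in> S"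
    then obtain r where r: "r \<in> R" "s = inverse x * r"
      unfolding S_def scale_def by blast
    have "s * i \<in> D" if "i \<in> I" for i
    proof -
      have "i * r \<in> st (ideal_mult D I R)"
        using star_extensive[OF IR] ideal_mult_memI that r by blast
      then obtain d where d: "d \<in> D" "i * r = x * d"
        using IR_eq unfolding principal_def by auto
      have "s * i = inverse x * (i * r)"
        using r by (simp add: ac_simps)
      also have "\<dots> = d"
        using d x by simp
      finally show ?thesis
        using d by simp
    qed
    then show "s \<in> ideal_inv D I"
      unfolding ideal_inv_def by blast
  qed
  have "ideal_mult D I S = scale (inverse x) (ideal_mult D I R)"
    unfolding S_def using scale_eq_ideal_mult D_submod_ideal_mult frac_ideal_D_submod[OF R]
    by (metis ideal_mult_left_commute)
  then have "st (ideal_mult D I S) = D"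
    using star_scale[OF _ IR] x IR_eq by (simp add: scale_principal principal_one)
  then show ?thesis
    using star_invertibleI[OF I _ \<open>S \<subseteq> ideal_inv D I\<close> fS] by simp
qed

lemma star_invertible_principal:
  assumes x: "x \<noteq> 0"
  shows "star_invertible D st (principal D x)"
proof (rule star_invertible_factor[OF frac_ideal_principal[OF x] frac_ideal_D x])
  show "st (ideal_mult D (principal D x) D) = principal D x"
    using ideal_mult_D_left[OF D_submod_principal] star_principal[OF x]
    by (simp add: ideal_mult_commute)
qed

subsection \<open>\<open>\<ast>\<close>-waf-SH domains\<close>

lemma star_waf_homog_if_torsion:
  assumes torsion: "star_class_group_torsion D st" and I: "star_homog D st I"
  shows "star_waf_homog D st I"
  unfolding star_waf_homog_def
proof (intro conjI impI allI I, elim conjE)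
  fix J assume "star_invertible D st J" "is_star_ideal J"
  then obtain n where "n \<ge> 1" "is_principal D (star_pow D st J n)"
    using torsion unfolding star_class_group_torsion_def by blast
  then show "\<exists>j\<ge>1. is_principal D (st (ideal_pow D J j))"
    using star_ideal_pow[OF star_idealD(1)[OF \<open>is_star_ideal J\<close>]] by auto
qed

lemma star_waf_SH_if_torsion:
  "star_SH D st \<Longrightarrow> star_class_group_torsion D st \<Longrightarrow> star_waf_SH D st"
  unfolding star_SH_def star_waf_SH_def using star_waf_homog_if_torsion by blast

lemma D_eq_UNIV_if_no_nonunit:
  assumes "\<nexists>z. nonzero_nonunit D z"
  shows "D = UNIV"
proof -
  have "z \<in> D" for z
  proof -
    obtain a b where ab: "a \<in> D" "b \<in> D" "b \<noteq> 0" "z = a / b"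
      using quotient_repr by blast
    then have "inverse b \<in> D"
      using assms unfolding nonzero_nonunit_def by blast
    then show ?thesis
      using ab mult_mem by (simp add: divide_inverse)
  qed
  then show ?thesis
    by blast
qed

lemma frac_ideal_eq_D_if_no_nonunit:
  assumes "\<nexists>z. nonzero_nonunit D z" and J: "frac_ideal D J"
  shows "J = D"
proof -
  have DU: "D = UNIV"
    using assms(1) by (rule D_eq_UNIV_if_no_nonunit)
  obtain y where y: "y \<in> J" "y \<noteq> 0"
    using J by (rule frac_ideal_nonzero_mem)
  have "(z * inverse y) * y \<in> J" for z
    using y frac_ideal_D_submod[OF J] DU unfolding D_submod_def by blast
  then have "z \<in> J" for z
    using y by (metis divide_inverse nonzero_eq_divide_eq)
  then show ?thesis
    using DU by blast
qed

lemma frac_ideal_has_nonunit: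
  assumes z: "nonzero_nonunit D z" and J: "frac_ideal D J"
  obtains x where "x \<in> J" "nonzero_nonunit D x"
proof -
  obtain d where d: "d \<in> D" "d \<noteq> 0" "\<And>u. u \<in> J \<Longrightarrow> d * u \<in> D"
    using frac_ideal_denominator[OF J] by blast
  obtain y where y: "y \<in> J" "y \<noteq> 0"
    using J by (rule frac_ideal_nonzero_mem)
  have z': "z \<in> D" "z \<noteq> 0" "inverse z \<notin> D"
    using z unfolding nonzero_nonunit_def by auto
  \<comment> \<open>\<open>d\<close> clears the denominators of \<open>J\<close>, the factor \<open>z\<close> keeps the product a nonunit\<close>
  define x where "x = (d * z) * y"
  have "x \<in> J"
    unfolding x_def using y d z' mult_mem frac_ideal_D_submod[OF J] unfolding D_submod_def by blast
  have dy: "d * y \<in> D"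
    using d y by blast
  have "x \<in> D"
    unfolding x_def using mult_mem[OF dy z'(1)] by (simp add: ac_simps)
  moreover have "x \<noteq> 0"
    unfolding x_def using d y z' by simp
  moreover have "inverse x \<notin> D"
  proof
    assume "inverse x \<in> D"
    moreover have "inverse x * (d * y) = inverse z"
      unfolding x_def using d y z' by (simp add: field_simps)
    ultimately show False
      using dy mult_mem z' by metis
  qed
  ultimately show thesis
    using that \<open>x \<in> J\<close> unfolding nonzero_nonunit_def by blast
qed

lemma star_waf_homog_factor:
  assumes waf: "star_waf_SH D st" and x: "nonzero_nonunit D x"
  obtains I R where "star_waf_homog D st I" "frac_ideal D R"
    "st (ideal_mult D I R) = principal D x"
proof -
  obtain Is where Is: "\<forall>I\<in>set Is. star_waf_homog D st I" "principal D x = st (ideal_prod D Is)"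
    using waf x unfolding star_waf_SH_def by blast
  have "Is \<noteq> []"
  proof
    assume "Is = []"
    then have "1 \<in> principal D x"
      using Is(2) star_D one_mem by (simp add: ideal_prod_def)
    then obtain e where "e \<in> D" "1 = x * e"
      unfolding principal_def by blast
    then show False
      using x unfolding nonzero_nonunit_def by (metis inverse_unique)
  qed
  then obtain I R where IR: "Is = I # R"
    by (cases Is) auto
  have "star_waf_homog D st I"
    using Is(1) IR by simp
  moreover have "frac_ideal D (ideal_prod D R)"
    using Is(1) IR frac_ideal_prod
    unfolding star_waf_homog_def star_homog_def proper_integral_star_ideal_def star_ideal_def
    by simp
  moreover have "st (ideal_mult D I (ideal_prod D R)) = principal D x"
    using Is(2) IR by (simp add: ideal_prod_def)
  ultimately show thesis
    by (rule that)
qed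

lemma star_waf_homog_principal_pow:
  assumes "star_waf_homog D st I" "star_invertible D st I"
    and "star_invertible D st J" "is_star_ideal J" "I \<subseteq> J"
  shows "\<exists>j\<ge>1. is_principal D (star_pow D st J j)"
  using assms star_ideal_pow star_idealD(1) unfolding star_waf_homog_def by metis

lemma is_principal_star_pow_cancel:
  assumes A: "is_star_ideal A" and w: "w \<noteq> 0"
    and P: "is_principal D (star_pow D st (star_mult (principal D w) A) n)"
  shows "is_principal D (star_pow D st A n)"
proof (rule is_principal_cancel_principal[OF star_ideal_star_pow[OF A] power_not_zero[OF w]])
  show "is_principal D (star_mult (principal D (w ^ n)) (star_pow D st A n))"
    using P star_pow_star_mult[OF star_ideal_principal[OF w] A] star_pow_principal[OF w] by simp
qed

lemma is_principal_star_pow_of_star_mult: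
  assumes A: "is_star_ideal A" and B: "is_star_ideal B"
    and pA: "is_principal D (star_pow D st A m)"
    and pBA: "is_principal D (star_pow D st (star_mult B A) j)"
  shows "is_principal D (star_pow D st B (j * m))"
proof -
  obtain w where w: "w \<noteq> 0" "star_pow D st A (j * m) = principal D w"
    using is_principal_star_pow[OF pA, of j] star_pow_mult[OF A, of m j]
    unfolding is_principal_def by (auto simp: mult.commute)
  have "is_principal D (star_pow D st (star_mult B A) (j * m))"
    using is_principal_star_pow[OF pBA, of m] star_pow_mult[OF star_mult_closed[OF B A]] by simp
  then have "is_principal D (star_mult (principal D w) (star_pow D st B (j * m)))"
    using star_pow_star_mult[OF B A] w(2) star_mult_commute by metis
  then show ?thesis
    by (rule is_principal_cancel_principal[OF star_ideal_star_pow[OF B] w(1)])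
qed

lemma subset_star_mult_inverse:
  assumes J: "frac_ideal D J" and I: "frac_ideal D I" and x: "x \<in> J" "x \<noteq> 0"
  shows "I \<subseteq> star_mult (star_mult (principal D (inverse x)) J) I"
proof
  have JI: "frac_ideal D (ideal_mult D J I)"
    using J I by (rule frac_ideal_mult)
  fix i assume "i \<in> I"
  then have "x * i \<in> st (ideal_mult D J I)"
    using star_extensive[OF JI] ideal_mult_memI x(1) by blast
  then have "inverse x * (x * i) \<in> scale (inverse x) (st (ideal_mult D J I))"
    unfolding scale_def by blast
  moreover have "star_mult (star_mult (principal D (inverse x)) J) I
      = scale (inverse x) (st (ideal_mult D J I))"
    using star_mult_assoc[OF frac_ideal_principal J I] x(2)
      star_mult_principal_left[OF star_frac_ideal[OF JI], of "inverse x"] star_idem[OF JI]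
    by (simp add: star_mult_def)
  ultimately show "i \<in> star_mult (star_mult (principal D (inverse x)) J) I"
    using x(2) by (simp add: mult.assoc[symmetric])
qed

lemma star_principal_pow_if_nonunit_mem:
  assumes waf: "star_waf_SH D st"
    and invJ: "star_invertible D st J" and sJ: "is_star_ideal J"
    and xJ: "x \<in> J" and x: "nonzero_nonunit D x"
  shows "\<exists>n\<ge>1. is_principal D (star_pow D st J n)"
proof -
  have x0: "x \<noteq> 0"
    using x unfolding nonzero_nonunit_def by blast
  obtain I R where I: "star_waf_homog D st I" and R: "frac_ideal D R"
    and IR: "st (ideal_mult D I R) = principal D x"
    using star_waf_homog_factor[OF waf x] by blast
  have sI: "is_star_ideal I"
    using I unfolding star_waf_homog_def star_homog_def proper_integral_star_ideal_def by blast
  have invI: "star_invertible D st I"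
    using star_invertible_factor[OF star_idealD(1)[OF sI] R x0 IR] .
  obtain m where m: "m \<ge> 1" "is_principal D (star_pow D st I m)"
    using star_waf_homog_principal_pow[OF I invI invI sI order_refl] by blast
  define B where "B = star_mult (principal D (inverse x)) J"
  have sB: "is_star_ideal B"
    unfolding B_def using star_mult_closed star_ideal_principal x0 sJ by simp
  have invB: "star_invertible D st B"
    unfolding B_def using star_invertible_star_mult star_invertible_principal invJ x0 by simp
  have "I \<subseteq> star_mult B I"
    unfolding B_def using star_idealD(1)[OF sJ] star_idealD(1)[OF sI] xJ x0
    by (rule subset_star_mult_inverse)
  then obtain j where j: "j \<ge> 1" "is_principal D (star_pow D st (star_mult B I) j)"
    using star_waf_homog_principal_pow[OF I invI star_invertible_star_mult[OF invB invI]
        star_mult_closed[OF sB sI]] by blast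
  have "is_principal D (star_pow D st B (j * m))"
    using sI sB m(2) j(2) by (rule is_principal_star_pow_of_star_mult)
  then have "is_principal D (star_pow D st J (j * m))"
    using is_principal_star_pow_cancel[OF sJ, of "inverse x"] x0 unfolding B_def by simp
  then show ?thesis
    using j(1) m(1) by (intro exI[of _ "j * m"]) simp
qed

lemma star_torsion_if_star_waf_SH:
  assumes waf: "star_waf_SH D st"
  shows "star_class_group_torsion D st"
  unfolding star_class_group_torsion_def
proof (intro allI impI, elim conjE)
  fix J assume invJ: "star_invertible D st J" and sJ: "is_star_ideal J"
  have fJ: "frac_ideal D J"
    using sJ by (rule star_idealD)
  show "\<exists>n\<ge>1. is_principal D (star_pow D st J n)"
  proof (cases "\<exists>z. nonzero_nonunit D z")
    case False
    then have "star_pow D st J 1 = principal D 1"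
      using frac_ideal_eq_D_if_no_nonunit[OF False fJ] star_D
      by (simp add: star_pow_Suc star_mult_def ideal_mult_D_left[OF D_submod_self] principal_one)
    then have "is_principal D (star_pow D st J 1)"
      unfolding is_principal_def by (intro exI[of _ 1]) simp
    then show ?thesis
      by blast
  next
    case True
    then obtain z where "nonzero_nonunit D z"
      by blast
    then obtain x where "x \<in> J" "nonzero_nonunit D x"
      using fJ by (rule frac_ideal_has_nonunit)
    then show ?thesis
      using waf invJ sJ by (intro star_principal_pow_if_nonunit_mem)
  qed
qed

end

lemma star_SH_if_star_waf_SH: "star_waf_SH D st \<Longrightarrow> star_SH D st"
  unfolding star_waf_SH_def star_SH_def star_waf_homog_def by metis

theorem mainTheorem18:
  fixes D :: "'k::field set" and st :: "'k set \<Rightarrow> 'k set"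
  assumes "is_domain_with_frac_field D"
    and "star_operation D st"
    and "finite_character D st"
  shows "star_waf_SH D st \<longleftrightarrow> star_SH D st \<and> star_class_group_torsion D st"
proof -
  interpret star_domain D st
    using assms(1,2) by unfold_locales
  show ?thesis
    using star_SH_if_star_waf_SH star_torsion_if_star_waf_SH star_waf_SH_if_torsion by blast
qed

end
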